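(* For every first-order formula $\phi(x_1,\dots,x_k)$ in the language $\{+,\times\}$ of arithmetic there is a first-order formula $\psi_\phi(x_1,\dots,x_k)$ in the language $\{\le,[1]+[1]\}$ such that for all $n_1,\dots,n_k\in\mathbb N$, $$\langle\mathbb N,+,\times\rangle\models\phi(n_1,\dots,n_k)\iff \mathbf Y^*\models\psi_\phi([n_1],\dots,[n_k]).$$
   Context: $\mathbb N$ is the set of non-negative integers with the usual addition and multiplication. $\mathcal P$ is the set of all integer partitions, including the empty partition $\emptyset$; a partition is a nonincreasing finite sequence of positive integers. $[n]$ denotes the partition with a single part $n$, with the convention $[0]=\emptyset$. Young's lattice $\mathbf Y=\langle\mathcal P,\le\rangle$ has $(s_1,\dots,s_r)\le(n_1,\dots,n_t)$ iff $r\le t$ and $s_i\le n_i$ for all $i\le r$; $\mathbf Y^*$ is $\mathbf Y$ with a constant symbol interpreted as the partition $[1]+[1]=(1,1)$. *)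

theory Defs
  imports Main
begin

definition is_partition :: "nat list \<Rightarrow> bool" where
  "is_partition xs \<longleftrightarrow> sorted_wrt (\<ge>) xs \<and> 0 \<notin> set xs"

definition single_part :: "nat \<Rightarrow> nat list" where
  "single_part n = (if n = 0 then [] else [n])"

definition young_le :: "nat list \<Rightarrow> nat list \<Rightarrow> bool" where
  "young_le xs ys \<longleftrightarrow> length xs \<le> length ys \<and> (\<forall>i<length xs. xs ! i \<le> ys ! i)"

text \<open>The constant of Y*: the partition [1]+[1] = (1,1).\<close>
definition one_one :: "nat list" where
  "one_one = [1, 1]"

datatype aterm = AVar nat | APlus aterm aterm | ATimes aterm aterm

datatype afm =
    AEq aterm aterm
  | ANeg afm
  | AConj afm afm
  | ADisj afm afm
  | AImp afm afm
  | AEx nat afm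
  | AAll nat afm

primrec aeval :: "(nat \<Rightarrow> nat) \<Rightarrow> aterm \<Rightarrow> nat" where
  "aeval e (AVar x) = e x"
| "aeval e (APlus s t) = aeval e s + aeval e t"
| "aeval e (ATimes s t) = aeval e s * aeval e t"

primrec atvars :: "aterm \<Rightarrow> nat set" where
  "atvars (AVar x) = {x}"
| "atvars (APlus s t) = atvars s \<union> atvars t"
| "atvars (ATimes s t) = atvars s \<union> atvars t"

primrec sat_N :: "(nat \<Rightarrow> nat) \<Rightarrow> afm \<Rightarrow> bool" where
  "sat_N e (AEq s t) = (aeval e s = aeval e t)"
| "sat_N e (ANeg f) = (\<not> sat_N e f)"
| "sat_N e (AConj f g) = (sat_N e f \<and> sat_N e g)"
| "sat_N e (ADisj f g) = (sat_N e f \<or> sat_N e g)"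
| "sat_N e (AImp f g) = (sat_N e f \<longrightarrow> sat_N e g)"
| "sat_N e (AEx x f) = (\<exists>n. sat_N (e(x := n)) f)"
| "sat_N e (AAll x f) = (\<forall>n. sat_N (e(x := n)) f)"

primrec afree :: "afm \<Rightarrow> nat set" where
  "afree (AEq s t) = atvars s \<union> atvars t"
| "afree (ANeg f) = afree f"
| "afree (AConj f g) = afree f \<union> afree g"
| "afree (ADisj f g) = afree f \<union> afree g"
| "afree (AImp f g) = afree f \<union> afree g"
| "afree (AEx x f) = afree f - {x}"
| "afree (AAll x f) = afree f - {x}"

datatype yterm = YVar nat | YConst

datatype yfm =
    YEq yterm yterm
  | YLe yterm yterm
  | YNeg yfm
  | YConj yfm yfm
  | YDisj yfm yfm
  | YImp yfm yfm
  | YEx nat yfm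
  | YAll nat yfm

primrec yeval :: "(nat \<Rightarrow> nat list) \<Rightarrow> yterm \<Rightarrow> nat list" where
  "yeval e (YVar x) = e x"
| "yeval e YConst = one_one"

primrec ytvars :: "yterm \<Rightarrow> nat set" where
  "ytvars (YVar x) = {x}"
| "ytvars YConst = {}"

primrec sat_Y :: "(nat \<Rightarrow> nat list) \<Rightarrow> yfm \<Rightarrow> bool" where
  "sat_Y e (YEq s t) = (yeval e s = yeval e t)"
| "sat_Y e (YLe s t) = young_le (yeval e s) (yeval e t)"
| "sat_Y e (YNeg f) = (\<not> sat_Y e f)"
| "sat_Y e (YConj f g) = (sat_Y e f \<and> sat_Y e g)"
| "sat_Y e (YDisj f g) = (sat_Y e f \<or> sat_Y e g)"
| "sat_Y e (YImp f g) = (sat_Y e f \<longrightarrow> sat_Y e g)"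
| "sat_Y e (YEx x f) = (\<exists>p. is_partition p \<and> sat_Y (e(x := p)) f)"
| "sat_Y e (YAll x f) = (\<forall>p. is_partition p \<longrightarrow> sat_Y (e(x := p)) f)"

primrec yfree :: "yfm \<Rightarrow> nat set" where
  "yfree (YEq s t) = ytvars s \<union> ytvars t"
| "yfree (YLe s t) = ytvars s \<union> ytvars t"
| "yfree (YNeg f) = yfree f"
| "yfree (YConj f g) = yfree f \<union> yfree g"
| "yfree (YDisj f g) = yfree f \<union> yfree g"
| "yfree (YImp f g) = yfree f \<union> yfree g"
| "yfree (YEx x f) = yfree f - {x}"
| "yfree (YAll x f) = yfree f - {x}"

end

theory Submission
  imports Defs
begin

text \<open>
  A natural number n is represented by the one-row partition [n] and, where a length is needed,
  by the one-column partition (1, ..., 1) with n parts. Rows, columns and the cell [1] are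
  definable from the order and (1,1). The m-th part of a partition x is the largest v such that
  the rectangle with m rows of length v lies below x, and the length of x is the longest column
  below x; so x can be read as the sequence of its parts. If adjacent parts of x differ by d,
  its largest part is lo + (n - 1) d, where lo is its smallest part and n its length. With
  lo = d = 1 this converts the row [n] into the column of length n; with lo = a + 1 and d = 1
  the largest part is a + b; and with lo = d = a, the steps being that addition, it is a b.
  Arithmetic formulas are then translated by relativising quantifiers to rows and unnesting
  terms through these graphs of addition and multiplication.
\<close>

section \<open>Rows and columns\<close>

abbreviation row :: "nat \<Rightarrow> nat list" where "row \<equiv> single_part"
abbreviation col :: "nat \<Rightarrow> nat list" where "col m \<equiv> replicate m (Suc 0)"

definition nth_part :: "nat list \<Rightarrow> nat \<Rightarrow> nat" where
  "nth_part x i = (if i < length x then x ! i else 0)"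

lemma partition_nth_pos: "is_partition x \<Longrightarrow> i < length x \<Longrightarrow> 0 < x ! i"
  unfolding is_partition_def by (metis gr0I nth_mem)

lemma partition_nth_antimono: "is_partition x \<Longrightarrow> i \<le> j \<Longrightarrow> j < length x \<Longrightarrow> x ! j \<le> x ! i"
  unfolding is_partition_def by (metis le_eq_less_or_eq order_refl sorted_wrt_iff_nth_less)

lemma is_partition_Nil [simp]: "is_partition []"
  by (simp add: is_partition_def)

lemma is_partition_row [simp]: "is_partition (row n)"
  by (simp add: is_partition_def single_part_def)

lemma is_partition_col [simp]: "is_partition (col m)"
  by (simp add: is_partition_def sorted_wrt_iff_nth_less)

lemma young_le_antisym: "young_le x y \<Longrightarrow> young_le y x \<Longrightarrow> x = y"
  unfolding young_le_def by (simp add: le_antisym nth_equalityI)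

lemma young_le_Nil [simp]: "young_le [] x"
  by (simp add: young_le_def)

lemma row_eq_iff [simp]: "row a = row b \<longleftrightarrow> a = b"
  by (simp add: single_part_def)

lemma row_eq_Nil_iff [simp]: "row n = [] \<longleftrightarrow> n = 0"
  by (simp add: single_part_def)

lemma nth_part_row_0 [simp]: "nth_part (row v) 0 = v"
  by (simp add: nth_part_def single_part_def)

lemma row_0 [simp]: "row 0 = []"
  by (simp add: single_part_def)

lemma Nil_eq_row_iff [simp]: "[] = row n \<longleftrightarrow> n = 0"
  by (simp add: single_part_def)

lemma sum_list_row [simp]: "sum_list (row n) = n"
  by (simp add: single_part_def)

lemma row_le_iff: "young_le (row n) x \<longleftrightarrow> n \<le> nth_part x 0"
  by (cases x) (auto simp: young_le_def single_part_def nth_part_def)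

lemma row_le_row_iff [simp]: "young_le (row a) (row b) \<longleftrightarrow> a \<le> b"
  by (auto simp: young_le_def single_part_def)

lemma col_le_iff: "is_partition x \<Longrightarrow> young_le (col m) x \<longleftrightarrow> m \<le> length x"
  by (auto simp: young_le_def Suc_leI partition_nth_pos)

lemma col_le_col_iff [simp]: "young_le (col a) (col b) \<longleftrightarrow> a \<le> b"
  by (auto simp: young_le_def)

lemma one_one_le_iff: "is_partition x \<Longrightarrow> young_le one_one x \<longleftrightarrow> 2 \<le> length x"
  using partition_nth_pos[of x 0] partition_nth_pos[of x 1]
  by (auto simp: young_le_def one_one_def less_Suc_eq numeral_2_eq_2 Suc_le_eq)
    (metis length_0_conv not_less0)

definition is_row :: "nat list \<Rightarrow> bool" where
  "is_row p \<longleftrightarrow> \<not> young_le one_one p"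

definition is_col :: "nat list \<Rightarrow> bool" where
  "is_col p \<longleftrightarrow> (\<forall>q. is_partition q \<longrightarrow> is_row q \<longrightarrow> young_le q p \<longrightarrow> young_le q one_one)"

definition is_cell :: "nat list \<Rightarrow> bool" where
  "is_cell p \<longleftrightarrow> is_row p \<and> is_col p \<and> p \<noteq> []"

lemma is_row_iff:
  assumes "is_partition p"
  shows "is_row p \<longleftrightarrow> (\<exists>n. p = row n)"
proof
  assume "is_row p"
  then have "length p \<le> 1"
    using one_one_le_iff[OF assms] by (simp add: is_row_def)
  then consider "p = []" | a where "p = [a]"
    by (cases p) auto
  then show "\<exists>n. p = row n"
    using partition_nth_pos[OF assms, of 0] by cases (auto simp: single_part_def)
qed (auto simp: is_row_def young_le_def one_one_def single_part_def)

lemma all_row_iff: "(\<forall>p. is_partition p \<longrightarrow> is_row p \<longrightarrow> P p) \<longleftrightarrow> (\<forall>n. P (row n))"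
  by (metis is_partition_row is_row_iff)

lemma ex_row_iff: "(\<exists>p. is_partition p \<and> is_row p \<and> P p) \<longleftrightarrow> (\<exists>n. P (row n))"
  by (metis is_partition_row is_row_iff)

lemma partition_eq_col_iff:
  assumes "is_partition p"
  shows "p = col (length p) \<longleftrightarrow> nth_part p 0 \<le> 1"
proof
  assume "nth_part p 0 \<le> 1"
  then have "p ! i = 1" if "i < length p" for i
    using that partition_nth_pos[OF assms, of i] partition_nth_antimono[OF assms, of 0 i]
    by (simp add: nth_part_def split: if_splits)
  then show "p = col (length p)"
    by (simp add: list_eq_iff_nth_eq)
next
  assume col: "p = col (length p)"
  have "p ! 0 = 1" if "0 < length p"
    using that by (subst col) simp
  then show "nth_part p 0 \<le> 1"
    by (simp add: nth_part_def)
qed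

lemma is_col_iff:
  assumes "is_partition p"
  shows "is_col p \<longleftrightarrow> (\<exists>m. p = col m)"
proof -
  have "is_col p \<longleftrightarrow> (\<forall>n. n \<le> nth_part p 0 \<longrightarrow> n \<le> 1)"
    by (simp add: is_col_def all_row_iff row_le_iff one_one_def nth_part_def)
  also have "\<dots> \<longleftrightarrow> p = col (length p)"
    using partition_eq_col_iff[OF assms] by auto
  finally show ?thesis
    by (metis length_replicate)
qed

lemma all_col_iff: "(\<forall>p. is_partition p \<longrightarrow> is_col p \<longrightarrow> P p) \<longleftrightarrow> (\<forall>m. P (col m))"
  by (metis is_partition_col is_col_iff)

lemma is_cell_iff:
  assumes "is_partition p"
  shows "is_cell p \<longleftrightarrow> p = [1]"
proof
  assume cell: "is_cell p"
  then obtain n where "p = row n"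
    using is_row_iff[OF assms] by (auto simp: is_cell_def)
  moreover obtain m where "p = col m"
    using cell is_col_iff[OF assms] by (auto simp: is_cell_def)
  ultimately show "p = [1]"
    using cell unfolding is_cell_def by (cases m) (auto simp: single_part_def split: if_splits)
next
  assume "p = [1]"
  moreover have "is_row [1]"
    by (simp add: is_row_def young_le_def one_one_def)
  moreover have "is_col (col 1)"
    using is_col_iff[OF is_partition_col] by blast
  ultimately show "is_cell p"
    by (simp add: is_cell_def)
qed

text \<open>
  Each relation below is written as a first-order condition over partitions: it is the meaning
  of the formula with the same name and suffix \<open>_fm\<close> defined further down.
\<close>

definition is_greatest :: "(nat list \<Rightarrow> bool) \<Rightarrow> nat list \<Rightarrow> bool" where
  "is_greatest P a \<longleftrightarrow> P a \<and> (\<forall>b. is_partition b \<longrightarrow> P b \<longrightarrow> young_le b a)"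

lemma is_greatest_iff:
  assumes "is_greatest P w" "is_partition w" "is_partition a"
  shows "is_greatest P a \<longleftrightarrow> a = w"
  using assms young_le_antisym unfolding is_greatest_def by blast

definition covers :: "(nat list \<Rightarrow> bool) \<Rightarrow> nat list \<Rightarrow> nat list \<Rightarrow> bool" where
  "covers P a b \<longleftrightarrow> P a \<and> P b \<and> young_le a b \<and> a \<noteq> b \<and>
     (\<forall>w. is_partition w \<longrightarrow> P w \<longrightarrow> young_le a w \<longrightarrow> young_le w b \<longrightarrow> w = a \<or> w = b)"

lemma covers_chain_iff:
  assumes P: "\<And>p. is_partition p \<Longrightarrow> P p \<longleftrightarrow> (\<exists>n. p = f n)"
    and f_partition: "\<And>n. is_partition (f n)"
    and f_le: "\<And>m n. young_le (f m) (f n) \<longleftrightarrow> m \<le> n"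
    and "is_partition a" "is_partition b"
  shows "covers P a b \<longleftrightarrow> (\<exists>n. a = f n \<and> b = f (Suc n))"
proof -
  have f_eq: "f m = f n \<longleftrightarrow> m = n" for m n
    by (metis f_le le_antisym order_refl)
  have P_f: "P (f n)" for n
    using P f_partition by blast
  have all_P: "(\<forall>w. is_partition w \<longrightarrow> P w \<longrightarrow> Q w) \<longleftrightarrow> (\<forall>j. Q (f j))" for Q
    using P P_f f_partition by blast
  have "covers P a b \<longleftrightarrow>
      (\<exists>m k. a = f m \<and> b = f k \<and> m < k \<and> (\<forall>j. m \<le> j \<longrightarrow> j \<le> k \<longrightarrow> j = m \<or> j = k))"
  proof
    assume cov: "covers P a b"
    then obtain m k where "a = f m" "b = f k"
      using P assms(4,5) by (auto simp: covers_def)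
    with cov show "\<exists>m k. a = f m \<and> b = f k \<and> m < k \<and> (\<forall>j. m \<le> j \<longrightarrow> j \<le> k \<longrightarrow> j = m \<or> j = k)"
      unfolding covers_def all_P by (auto simp: f_eq f_le less_le)
  qed (auto simp: covers_def all_P f_eq f_le P_f)
  also have "\<dots> \<longleftrightarrow> (\<exists>n. a = f n \<and> b = f (Suc n))"
  proof
    assume "\<exists>m k. a = f m \<and> b = f k \<and> m < k \<and> (\<forall>j. m \<le> j \<longrightarrow> j \<le> k \<longrightarrow> j = m \<or> j = k)"
    then obtain m k where "a = f m" "b = f k" "m < k" "\<forall>j. m \<le> j \<longrightarrow> j \<le> k \<longrightarrow> j = m \<or> j = k"
      by blast
    moreover from this have "k = Suc m"
      by (metis Suc_leI le_SucI n_not_Suc_n order_refl)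
    ultimately show "\<exists>n. a = f n \<and> b = f (Suc n)"
      by blast
  next
    assume "\<exists>n. a = f n \<and> b = f (Suc n)"
    then obtain n where "a = f n" "b = f (Suc n)"
      by blast
    then show "\<exists>m k. a = f m \<and> b = f k \<and> m < k \<and> (\<forall>j. m \<le> j \<longrightarrow> j \<le> k \<longrightarrow> j = m \<or> j = k)"
      by (intro exI[of _ n] exI[of _ "Suc n"]) (auto simp: le_Suc_eq)
  qed
  finally show ?thesis .
qed

lemma covers_row_iff:
  "is_partition a \<Longrightarrow> is_partition b \<Longrightarrow> covers is_row a b \<longleftrightarrow> (\<exists>n. a = row n \<and> b = row (Suc n))"
  by (rule covers_chain_iff) (auto simp: is_row_iff)

lemma covers_row_row [simp]: "covers is_row (row a) (row b) \<longleftrightarrow> b = Suc a"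
  by (simp add: covers_row_iff)

lemma covers_col_iff:
  "is_partition a \<Longrightarrow> is_partition b \<Longrightarrow> covers is_col a b \<longleftrightarrow> (\<exists>n. a = col n \<and> b = col (Suc n))"
  by (rule covers_chain_iff) (auto simp: is_col_iff simp del: replicate_Suc)

definition in_box :: "nat list \<Rightarrow> nat list \<Rightarrow> nat list \<Rightarrow> bool" where
  "in_box y a c \<longleftrightarrow>
     (\<forall>p. is_partition p \<longrightarrow> is_row p \<longrightarrow> young_le p y \<longrightarrow> young_le p a) \<and>
     (\<forall>p. is_partition p \<longrightarrow> is_col p \<longrightarrow> young_le p y \<longrightarrow> young_le p c)"

definition box_le :: "nat list \<Rightarrow> nat list \<Rightarrow> nat list \<Rightarrow> bool" where
  "box_le a c x \<longleftrightarrow> (\<exists>r. is_partition r \<and> young_le r x \<and> is_greatest (\<lambda>y. in_box y a c) r)"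

definition rect :: "nat \<Rightarrow> nat \<Rightarrow> nat list" where
  "rect v m = (if v = 0 then [] else replicate m v)"

lemma is_partition_rect: "is_partition (rect v m)"
  by (auto simp: rect_def is_partition_def sorted_wrt_iff_nth_less)

lemma in_box_iff:
  "is_partition y \<Longrightarrow> in_box y (row v) (col m) \<longleftrightarrow> nth_part y 0 \<le> v \<and> length y \<le> m"
  unfolding in_box_def all_row_iff all_col_iff
  by (auto simp: row_le_iff col_le_iff simp del: replicate_Suc)

lemma partition_le_rect:
  assumes y: "is_partition y" and "nth_part y 0 \<le> v" "length y \<le> m"
  shows "young_le y (rect v m)"
proof -
  have "y ! i \<le> v" if "i < length y" for i
    using that assms partition_nth_antimono[OF y, of 0 i] by (cases y) (auto simp: nth_part_def)
  moreover have "v \<noteq> 0" if "y \<noteq> []"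
    using that assms partition_nth_pos[OF y, of 0] by (simp add: nth_part_def)
  ultimately show ?thesis
    using assms by (auto simp: young_le_def rect_def)
qed

lemma is_greatest_in_box_rect: "is_greatest (\<lambda>y. in_box y (row v) (col m)) (rect v m)"
  using partition_le_rect in_box_iff is_partition_rect
  by (auto simp: is_greatest_def rect_def nth_part_def)

lemma rect_le_iff:
  assumes x: "is_partition x" and "0 < m"
  shows "young_le (rect v m) x \<longleftrightarrow> v \<le> nth_part x (m - 1)"
proof (cases "v = 0")
  case False
  have "young_le (rect v m) x \<longleftrightarrow> m \<le> length x \<and> (\<forall>i<m. v \<le> x ! i)"
    using False by (auto simp: rect_def young_le_def)
  also have "\<dots> \<longleftrightarrow> v \<le> nth_part x (m - 1)"
    using False \<open>0 < m\<close> partition_nth_antimono[OF x, of _ "m - 1"]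
    by (auto simp: nth_part_def intro: order_trans)
  finally show ?thesis .
qed (simp add: rect_def)

lemma box_le_iff:
  assumes "is_partition x" "0 < m"
  shows "box_le (row v) (col m) x \<longleftrightarrow> v \<le> nth_part x (m - 1)"
proof -
  have "box_le (row v) (col m) x \<longleftrightarrow> young_le (rect v m) x"
    unfolding box_le_def by (metis is_greatest_iff is_greatest_in_box_rect is_partition_rect)
  then show ?thesis
    using rect_le_iff[OF assms] by simp
qed

definition part_at :: "nat list \<Rightarrow> nat list \<Rightarrow> nat list \<Rightarrow> bool" where
  "part_at x c a \<longleftrightarrow> is_greatest (\<lambda>b. is_row b \<and> box_le b c x) a"

lemma part_at_iff:
  assumes "is_partition x" "is_partition a" "0 < m"
  shows "part_at x (col m) a \<longleftrightarrow> a = row (nth_part x (m - 1))"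
proof -
  have "is_greatest (\<lambda>b. is_row b \<and> box_le b (col m) x) (row (nth_part x (m - 1)))"
    using is_row_iff box_le_iff[OF assms(1,3)]
    by (auto simp: is_greatest_def)
  then show ?thesis
    unfolding part_at_def using is_greatest_iff assms(2) by simp
qed

definition col_length :: "nat list \<Rightarrow> nat list \<Rightarrow> bool" where
  "col_length x l \<longleftrightarrow> is_greatest (\<lambda>d. is_col d \<and> young_le d x) l"

lemma col_length_iff:
  assumes "is_partition x" "is_partition l"
  shows "col_length x l \<longleftrightarrow> l = col (length x)"
proof -
  have "is_greatest (\<lambda>d. is_col d \<and> young_le d x) (col (length x))"
    using is_col_iff col_le_iff[OF assms(1)] by (auto simp: is_greatest_def simp del: replicate_Suc)
  then show ?thesis
    unfolding col_length_def using is_greatest_iff assms(2) by simp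
qed

definition adjacent_parts :: "(nat list \<Rightarrow> nat list \<Rightarrow> bool) \<Rightarrow> nat list \<Rightarrow> bool" where
  "adjacent_parts R x \<longleftrightarrow> (\<forall>c. is_partition c \<longrightarrow> (\<forall>d. is_partition d \<longrightarrow>
     c \<noteq> [] \<longrightarrow> covers is_col c d \<longrightarrow> young_le d x \<longrightarrow>
     (\<exists>u. is_partition u \<and> (\<exists>v. is_partition v \<and> part_at x c u \<and> part_at x d v \<and> R v u))))"

lemma adjacent_parts_iff:
  assumes x: "is_partition x"
  shows "adjacent_parts R x \<longleftrightarrow> (\<forall>i. Suc i < length x \<longrightarrow> R (row (x ! Suc i)) (row (x ! i)))"
proof
  assume st: "adjacent_parts R x"
  show "\<forall>i. Suc i < length x \<longrightarrow> R (row (x ! Suc i)) (row (x ! i))"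
  proof (intro allI impI)
    fix i
    assume i: "Suc i < length x"
    have "covers is_col (col (Suc i)) (col (Suc (Suc i)))" "young_le (col (Suc (Suc i))) x"
      using i covers_col_iff col_le_iff[OF x] by (auto simp del: replicate_Suc)
    then obtain u v where "is_partition u" "is_partition v" "R v u"
        "part_at x (col (Suc i)) u" "part_at x (col (Suc (Suc i))) v"
      using st unfolding adjacent_parts_def by (metis is_partition_col Zero_not_Suc length_0_conv length_replicate)
    then show "R (row (x ! Suc i)) (row (x ! i))"
      using i part_at_iff[OF x] by (auto simp: nth_part_def simp del: replicate_Suc)
  qed
next
  assume R: "\<forall>i. Suc i < length x \<longrightarrow> R (row (x ! Suc i)) (row (x ! i))"
  show "adjacent_parts R x"
    unfolding adjacent_parts_def
  proof (intro allI impI)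
    fix c d
    assume "is_partition c" "is_partition d" "c \<noteq> []" "covers is_col c d" "young_le d x"
    then obtain i where c: "c = col (Suc i)" and d: "d = col (Suc (Suc i))" and i: "Suc i < length x"
      using covers_col_iff col_le_iff[OF x] by (metis Suc_le_eq not0_implies_Suc replicate_0)
    then have "part_at x c (row (x ! i))" "part_at x d (row (x ! Suc i))"
      using part_at_iff[OF x] by (auto simp: nth_part_def simp del: replicate_Suc)
    then show "\<exists>u. is_partition u \<and> (\<exists>v. is_partition v \<and> part_at x c u \<and> part_at x d v \<and> R v u)"
      using R i is_partition_row by blast
  qed
qed

definition progression ::
    "(nat list \<Rightarrow> nat list \<Rightarrow> bool) \<Rightarrow> nat list \<Rightarrow> nat list \<Rightarrow> nat list \<Rightarrow> nat list \<Rightarrow> bool" where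
  "progression R x l lo hi \<longleftrightarrow> col_length x l \<and> l \<noteq> [] \<and> adjacent_parts R x \<and> part_at x l lo \<and>
     (\<exists>c. is_partition c \<and> is_cell c \<and> part_at x c hi)"

lemma progression_iff:
  assumes "is_partition x" "is_partition l" "is_partition lo" "is_partition hi"
  shows "progression R x l lo hi \<longleftrightarrow> x \<noteq> [] \<and> l = col (length x) \<and> lo = row (last x) \<and>
    hi = row (hd x) \<and> (\<forall>i. Suc i < length x \<longrightarrow> R (row (x ! Suc i)) (row (x ! i)))"
proof -
  have "(\<exists>c. is_partition c \<and> is_cell c \<and> part_at x c hi) \<longleftrightarrow> part_at x (col 1) hi"
    using is_cell_iff is_partition_row[of 1] by (auto simp: single_part_def)
  then show ?thesis
    using assms col_length_iff part_at_iff adjacent_parts_iff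
    by (cases x) (auto simp: progression_def nth_part_def last_conv_nth simp del: replicate_Suc)
qed

section \<open>Arithmetic progressions\<close>

definition decreases_by :: "nat \<Rightarrow> nat list \<Rightarrow> bool" where
  "decreases_by d x \<longleftrightarrow> (\<forall>i. Suc i < length x \<longrightarrow> x ! i = x ! Suc i + d)"

lemma hd_eq_last_if_decreases_by:
  "decreases_by d x \<Longrightarrow> x \<noteq> [] \<Longrightarrow> hd x = last x + (length x - 1) * d"
proof (induction x)
  case (Cons a xs)
  show ?case
  proof (cases "xs = []")
    case False
    have "decreases_by d xs"
      using Cons.prems(1) by (auto simp: decreases_by_def)
    then have "hd xs = last xs + (length xs - 1) * d"
      using Cons.IH False by blast
    moreover have "a = hd xs + d"
      using Cons.prems(1) False by (auto simp: decreases_by_def hd_conv_nth)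
    ultimately show ?thesis
      using False by (cases xs) auto
  qed simp
qed simp

definition countdown :: "nat \<Rightarrow> nat \<Rightarrow> nat \<Rightarrow> nat list" where
  "countdown lo d n = map (\<lambda>i. lo + (n - 1 - i) * d) [0..<n]"

lemma length_countdown [simp]: "length (countdown lo d n) = n"
  by (simp add: countdown_def)

lemma nth_countdown [simp]: "i < n \<Longrightarrow> countdown lo d n ! i = lo + (n - 1 - i) * d"
  by (simp add: countdown_def)

lemma is_partition_countdown: "0 < lo \<Longrightarrow> is_partition (countdown lo d n)"
  unfolding is_partition_def countdown_def
  by (auto simp: sorted_wrt_iff_nth_less intro!: mult_le_mono1)

lemma countdown_eq_Nil_iff [simp]: "countdown lo d n = [] \<longleftrightarrow> n = 0"
  by (simp add: countdown_def)

lemma hd_countdown [simp]: "0 < n \<Longrightarrow> hd (countdown lo d n) = lo + (n - 1) * d"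
  by (simp add: hd_conv_nth)

lemma last_countdown [simp]: "0 < n \<Longrightarrow> last (countdown lo d n) = lo"
  by (simp add: last_conv_nth)

lemma decreases_by_countdown: "decreases_by d (countdown lo d n)"
  unfolding decreases_by_def
proof (intro allI impI)
  fix i
  assume i: "Suc i < length (countdown lo d n)"
  then have "n - 1 - i = Suc (n - 1 - Suc i)"
    by simp
  then show "countdown lo d n ! i = countdown lo d n ! Suc i + d"
    using i by simp
qed

lemma progression_rows_iff:
  assumes step: "\<And>v u. R (row v) (row u) \<longleftrightarrow> u = v + d"
    and "0 < lo" "is_partition l" "is_partition hi"
  shows "(\<exists>x. is_partition x \<and> progression R x l (row lo) hi) \<longleftrightarrow>
    (\<exists>n. 0 < n \<and> l = col n \<and> hi = row (lo + (n - 1) * d))"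
proof
  assume "\<exists>x. is_partition x \<and> progression R x l (row lo) hi"
  then obtain x where x: "is_partition x" "x \<noteq> []" "l = col (length x)" "lo = last x" "hi = row (hd x)"
      "decreases_by d x"
    using progression_iff[of _ l "row lo" hi] assms by (auto simp: step decreases_by_def)
  then show "\<exists>n. 0 < n \<and> l = col n \<and> hi = row (lo + (n - 1) * d)"
    using hd_eq_last_if_decreases_by by auto
next
  assume "\<exists>n. 0 < n \<and> l = col n \<and> hi = row (lo + (n - 1) * d)"
  then obtain n where n: "0 < n" "l = col n" "hi = row (lo + (n - 1) * d)"
    by blast
  let ?x = "countdown lo d n"
  have "progression R ?x l (row lo) hi"
    using n assms progression_iff[OF is_partition_countdown] decreases_by_countdown[of d lo n]
    by (auto simp: step decreases_by_def)
  then show "\<exists>x. is_partition x \<and> progression R x l (row lo) hi"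
    using is_partition_countdown \<open>0 < lo\<close> by blast
qed

definition row_to_col :: "nat list \<Rightarrow> nat list \<Rightarrow> bool" where
  "row_to_col b l \<longleftrightarrow> (b = [] \<and> l = []) \<or>
     (\<exists>c. is_partition c \<and> is_cell c \<and> (\<exists>x. is_partition x \<and> progression (covers is_row) x l c b))"

lemma row_to_col_iff:
  assumes "is_partition l"
  shows "row_to_col (row n) l \<longleftrightarrow> l = col n"
proof -
  have "row_to_col (row n) l \<longleftrightarrow>
      (n = 0 \<and> l = []) \<or> (\<exists>x. is_partition x \<and> progression (covers is_row) x l (row 1) (row n))"
    using is_cell_iff is_partition_row[of 1] by (auto simp: row_to_col_def single_part_def)
  also have "\<dots> \<longleftrightarrow> l = col n"
    using progression_rows_iff[of "covers is_row" 1 1 l "row n"] assms by auto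
  finally show ?thesis .
qed

definition add_rel :: "nat list \<Rightarrow> nat list \<Rightarrow> nat list \<Rightarrow> bool" where
  "add_rel a b c \<longleftrightarrow> (b = [] \<and> c = a) \<or>
     (\<exists>l. is_partition l \<and> (\<exists>a'. is_partition a' \<and> row_to_col b l \<and> covers is_row a a' \<and>
       (\<exists>x. is_partition x \<and> progression (covers is_row) x l a' c)))"

lemma add_rel_iff:
  assumes "is_partition c"
  shows "add_rel (row m) (row n) c \<longleftrightarrow> c = row (m + n)"
proof -
  have "add_rel (row m) (row n) c \<longleftrightarrow>
      (n = 0 \<and> c = row m) \<or> (\<exists>x. is_partition x \<and> progression (covers is_row) x (col n) (row (Suc m)) c)"
    by (simp add: add_rel_def row_to_col_iff covers_row_iff cong: conj_cong del: replicate_Suc)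
  also have "\<dots> \<longleftrightarrow> c = row (m + n)"
    using progression_rows_iff[of "covers is_row" 1 "Suc m" "col n" c] assms
    by (cases n) (auto simp del: replicate_Suc)
  finally show ?thesis .
qed

definition mul_rel :: "nat list \<Rightarrow> nat list \<Rightarrow> nat list \<Rightarrow> bool" where
  "mul_rel a b c \<longleftrightarrow> ((a = [] \<or> b = []) \<and> c = []) \<or>
     (a \<noteq> [] \<and> (\<exists>l. is_partition l \<and> row_to_col b l \<and>
       (\<exists>x. is_partition x \<and> progression (\<lambda>v u. add_rel v a u) x l a c)))"

lemma mul_rel_iff:
  assumes "is_partition c"
  shows "mul_rel (row m) (row n) c \<longleftrightarrow> c = row (m * n)"
proof -
  have "mul_rel (row m) (row n) c \<longleftrightarrow> ((m = 0 \<or> n = 0) \<and> c = []) \<or>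
      (m \<noteq> 0 \<and> (\<exists>x. is_partition x \<and> progression (\<lambda>v u. add_rel v (row m) u) x (col n) (row m) c))"
    by (simp add: mul_rel_def row_to_col_iff cong: conj_cong del: replicate_Suc)
  also have "\<dots> \<longleftrightarrow> c = row (m * n)"
  proof (cases "m = 0")
    case False
    have "(\<exists>x. is_partition x \<and> progression (\<lambda>v u. add_rel v (row m) u) x (col n) (row m) c) \<longleftrightarrow>
        (\<exists>k. 0 < k \<and> col n = col k \<and> c = row (m + (k - 1) * m))"
      using False assms by (intro progression_rows_iff) (auto simp: add_rel_iff)
    then show ?thesis
      using False by (cases n) (auto simp: add.commute simp del: replicate_Suc)
  qed simp
  finally show ?thesis .
qed

text \<open>
  Bound variables are always chosen larger than every free variable in their scope, so they
  capture nothing.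
\<close>

definition empty_fm :: "nat \<Rightarrow> yfm" where
  "empty_fm x = YAll (Suc x) (YLe (YVar x) (YVar (Suc x)))"

definition row_fm :: "nat \<Rightarrow> yfm" where
  "row_fm x = YNeg (YLe YConst (YVar x))"

definition col_fm :: "nat \<Rightarrow> yfm" where
  "col_fm x = YAll (Suc x)
     (YImp (row_fm (Suc x)) (YImp (YLe (YVar (Suc x)) (YVar x)) (YLe (YVar (Suc x)) YConst)))"

definition cell_fm :: "nat \<Rightarrow> yfm" where
  "cell_fm x = YConj (row_fm x) (YConj (col_fm x) (YNeg (empty_fm x)))"

lemma sat_empty_fm [simp]: "sat_Y e (empty_fm x) \<longleftrightarrow> e x = []"
  by (auto simp: empty_fm_def) (metis is_partition_Nil young_le_def le_zero_eq length_0_conv list.size(3))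

lemma sat_row_fm [simp]: "sat_Y e (row_fm x) \<longleftrightarrow> is_row (e x)"
  by (simp add: row_fm_def is_row_def)

lemma sat_col_fm [simp]: "sat_Y e (col_fm x) \<longleftrightarrow> is_col (e x)"
  by (simp add: col_fm_def is_col_def)

lemma sat_cell_fm [simp]: "sat_Y e (cell_fm x) \<longleftrightarrow> is_cell (e x)"
  by (simp add: cell_fm_def is_cell_def)

lemma yfree_empty_fm [simp]: "yfree (empty_fm x) = {x}"
  by (auto simp: empty_fm_def)

lemma yfree_row_fm [simp]: "yfree (row_fm x) = {x}"
  by (auto simp: row_fm_def)

lemma yfree_col_fm [simp]: "yfree (col_fm x) = {x}"
  by (auto simp: col_fm_def)

lemma yfree_cell_fm [simp]: "yfree (cell_fm x) = {x}"
  by (auto simp: cell_fm_def)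

definition in_box_fm :: "nat \<Rightarrow> nat \<Rightarrow> nat \<Rightarrow> yfm" where
  "in_box_fm y a c = (let b = y + a + c + 1 in
     YConj (YAll b (YImp (row_fm b) (YImp (YLe (YVar b) (YVar y)) (YLe (YVar b) (YVar a)))))
           (YAll b (YImp (col_fm b) (YImp (YLe (YVar b) (YVar y)) (YLe (YVar b) (YVar c))))))"

definition box_le_fm :: "nat \<Rightarrow> nat \<Rightarrow> nat \<Rightarrow> yfm" where
  "box_le_fm a c x = (let r = x + a + c + 1 in
     YEx r (YConj (YLe (YVar r) (YVar x)) (YConj (in_box_fm r a c)
       (YAll (Suc r) (YImp (in_box_fm (Suc r) a c) (YLe (YVar (Suc r)) (YVar r)))))))"

definition part_at_fm :: "nat \<Rightarrow> nat \<Rightarrow> nat \<Rightarrow> yfm" where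
  "part_at_fm x c a = (let b = x + c + a + 1 in
     YConj (row_fm a) (YConj (box_le_fm a c x)
       (YAll b (YImp (row_fm b) (YImp (box_le_fm b c x) (YLe (YVar b) (YVar a)))))))"

definition covers_fm :: "(nat \<Rightarrow> yfm) \<Rightarrow> nat \<Rightarrow> nat \<Rightarrow> yfm" where
  "covers_fm cls a b = (let w = a + b + 1 in
     YConj (cls a) (YConj (cls b) (YConj (YLe (YVar a) (YVar b)) (YConj (YNeg (YEq (YVar a) (YVar b)))
       (YAll w (YImp (cls w) (YImp (YLe (YVar a) (YVar w)) (YImp (YLe (YVar w) (YVar b))
         (YDisj (YEq (YVar w) (YVar a)) (YEq (YVar w) (YVar b)))))))))))"

definition col_length_fm :: "nat \<Rightarrow> nat \<Rightarrow> yfm" where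
  "col_length_fm x l = (let d = x + l + 1 in
     YConj (col_fm l) (YConj (YLe (YVar l) (YVar x))
       (YAll d (YImp (col_fm d) (YImp (YLe (YVar d) (YVar x)) (YLe (YVar d) (YVar l)))))))"

lemma sat_in_box_fm [simp]: "sat_Y e (in_box_fm y a c) \<longleftrightarrow> in_box (e y) (e a) (e c)"
  by (simp add: in_box_fm_def in_box_def Let_def)

lemma sat_box_le_fm [simp]: "sat_Y e (box_le_fm a c x) \<longleftrightarrow> box_le (e a) (e c) (e x)"
  by (simp add: box_le_fm_def box_le_def is_greatest_def Let_def)

lemma sat_part_at_fm [simp]: "sat_Y e (part_at_fm x c a) \<longleftrightarrow> part_at (e x) (e c) (e a)"
  by (simp add: part_at_fm_def part_at_def is_greatest_def Let_def imp_conjL)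

lemma sat_covers_fm:
  assumes "\<And>e x. sat_Y e (cls x) \<longleftrightarrow> P (e x)"
  shows "sat_Y e (covers_fm cls a b) \<longleftrightarrow> covers P (e a) (e b)"
  by (simp add: covers_fm_def covers_def assms Let_def)

lemma sat_covers_row_fm [simp]: "sat_Y e (covers_fm row_fm a b) \<longleftrightarrow> covers is_row (e a) (e b)"
  by (rule sat_covers_fm) simp

lemma sat_covers_col_fm [simp]: "sat_Y e (covers_fm col_fm a b) \<longleftrightarrow> covers is_col (e a) (e b)"
  by (rule sat_covers_fm) simp

lemma sat_col_length_fm [simp]: "sat_Y e (col_length_fm x l) \<longleftrightarrow> col_length (e x) (e l)"
  by (simp add: col_length_fm_def col_length_def is_greatest_def Let_def imp_conjL)

lemma yfree_in_box_fm: "yfree (in_box_fm y a c) \<subseteq> {y, a, c}"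
  by (auto simp: in_box_fm_def Let_def)

lemma yfree_box_le_fm: "yfree (box_le_fm a c x) \<subseteq> {a, c, x}"
  using yfree_in_box_fm by (fastforce simp: box_le_fm_def Let_def)

lemma yfree_part_at_fm: "yfree (part_at_fm x c a) \<subseteq> {x, c, a}"
  using yfree_box_le_fm by (fastforce simp: part_at_fm_def Let_def)

lemma yfree_covers_fm:
  assumes "\<And>x. yfree (cls x) \<subseteq> {x}"
  shows "yfree (covers_fm cls a b) \<subseteq> {a, b}"
  using assms by (fastforce simp: covers_fm_def Let_def)

lemma yfree_col_length_fm: "yfree (col_length_fm x l) \<subseteq> {x, l}"
  by (auto simp: col_length_fm_def Let_def)

text \<open>
  The step formula \<open>rel v u\<close> may mention a parameter variable \<open>a\<close> besides \<open>v\<close> and \<open>u\<close>;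
  the bound variables are chosen above \<open>a\<close> as well. A step formula without parameter is
  given an arbitrary \<open>a\<close>.
\<close>

definition adjacent_parts_fm :: "(nat \<Rightarrow> nat \<Rightarrow> yfm) \<Rightarrow> nat \<Rightarrow> nat \<Rightarrow> yfm" where
  "adjacent_parts_fm rel a x = (let c = x + a + 1 in
     YAll c (YAll (c + 1) (YImp (YNeg (empty_fm c)) (YImp (covers_fm col_fm c (c + 1))
       (YImp (YLe (YVar (c + 1)) (YVar x)) (YEx (c + 2) (YEx (c + 3)
         (YConj (part_at_fm x c (c + 2)) (YConj (part_at_fm x (c + 1) (c + 3)) (rel (c + 3) (c + 2)))))))))))"

definition progression_fm :: "(nat \<Rightarrow> nat \<Rightarrow> yfm) \<Rightarrow> nat \<Rightarrow> nat \<Rightarrow> nat \<Rightarrow> nat \<Rightarrow> nat \<Rightarrow> yfm" where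
  "progression_fm rel a x l lo hi = (let c = x + l + lo + hi + a + 1 in
     YConj (col_length_fm x l) (YConj (YNeg (empty_fm l)) (YConj (adjacent_parts_fm rel a x)
       (YConj (part_at_fm x l lo) (YEx c (YConj (cell_fm c) (part_at_fm x c hi)))))))"

lemma sat_adjacent_parts_fm:
  assumes "\<And>e v u. sat_Y e (rel v u) \<longleftrightarrow> R (e a) (e v) (e u)"
  shows "sat_Y e (adjacent_parts_fm rel a x) \<longleftrightarrow> adjacent_parts (R (e a)) (e x)"
  by (simp add: adjacent_parts_fm_def adjacent_parts_def assms Let_def)

lemma sat_progression_fm:
  assumes "\<And>e v u. sat_Y e (rel v u) \<longleftrightarrow> R (e a) (e v) (e u)"
  shows "sat_Y e (progression_fm rel a x l lo hi) \<longleftrightarrow> progression (R (e a)) (e x) (e l) (e lo) (e hi)"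
  by (simp add: progression_fm_def progression_def sat_adjacent_parts_fm[where rel = rel and a = a, OF assms] Let_def)

lemma yfree_adjacent_parts_fm:
  assumes "\<And>v u. yfree (rel v u) \<subseteq> {a, v, u}"
  shows "yfree (adjacent_parts_fm rel a x) \<subseteq> {a, x}"
  using yfree_covers_fm[of col_fm]
  by (auto simp: adjacent_parts_fm_def Let_def dest!: subsetD[OF yfree_part_at_fm] subsetD[OF assms])

lemma yfree_progression_fm:
  assumes "\<And>v u. yfree (rel v u) \<subseteq> {a, v, u}"
  shows "yfree (progression_fm rel a x l lo hi) \<subseteq> {a, x, l, lo, hi}"
  by (auto simp: progression_fm_def Let_def dest!: subsetD[OF yfree_adjacent_parts_fm[OF assms]]
      subsetD[OF yfree_col_length_fm] subsetD[OF yfree_part_at_fm])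

definition row_to_col_fm :: "nat \<Rightarrow> nat \<Rightarrow> yfm" where
  "row_to_col_fm b l = (let c = b + l + 1 in
     YDisj (YConj (empty_fm b) (empty_fm l))
       (YEx c (YConj (cell_fm c) (YEx (c + 1) (progression_fm (covers_fm row_fm) c (c + 1) l c b)))))"

definition add_fm :: "nat \<Rightarrow> nat \<Rightarrow> nat \<Rightarrow> yfm" where
  "add_fm a b c = (let l = a + b + c + 1 in
     YDisj (YConj (empty_fm b) (YEq (YVar c) (YVar a)))
       (YEx l (YEx (l + 1) (YConj (row_to_col_fm b l) (YConj (covers_fm row_fm a (l + 1))
         (YEx (l + 2) (progression_fm (covers_fm row_fm) a (l + 2) l (l + 1) c)))))))"

definition mul_fm :: "nat \<Rightarrow> nat \<Rightarrow> nat \<Rightarrow> yfm" where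
  "mul_fm a b c = (let l = a + b + c + 1 in
     YDisj (YConj (YDisj (empty_fm a) (empty_fm b)) (empty_fm c))
       (YConj (YNeg (empty_fm a)) (YEx l (YConj (row_to_col_fm b l)
         (YEx (l + 1) (progression_fm (\<lambda>v u. add_fm v a u) a (l + 1) l a c))))))"

lemma sat_row_to_col_fm [simp]: "sat_Y e (row_to_col_fm b l) \<longleftrightarrow> row_to_col (e b) (e l)"
  by (simp add: row_to_col_fm_def row_to_col_def sat_progression_fm[where R = "\<lambda>_. covers is_row"] Let_def)

lemma sat_add_fm [simp]: "sat_Y e (add_fm a b c) \<longleftrightarrow> add_rel (e a) (e b) (e c)"
  by (simp add: add_fm_def add_rel_def sat_progression_fm[where R = "\<lambda>_. covers is_row"] Let_def)

lemma sat_mul_fm [simp]: "sat_Y e (mul_fm a b c) \<longleftrightarrow> mul_rel (e a) (e b) (e c)"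
  by (simp add: mul_fm_def mul_rel_def sat_progression_fm[where R = "\<lambda>p v u. add_rel v p u"] Let_def)

lemma yfree_covers_row_fm: "yfree (covers_fm row_fm v u) \<subseteq> {a, v, u}"
  using yfree_covers_fm[of row_fm] by fastforce

lemma yfree_row_to_col_fm: "yfree (row_to_col_fm b l) \<subseteq> {b, l}"
  by (auto simp: row_to_col_fm_def Let_def dest!: subsetD[OF yfree_progression_fm[OF yfree_covers_row_fm]])

lemma yfree_add_fm: "yfree (add_fm a b c) \<subseteq> {a, b, c}"
  using yfree_covers_row_fm[of a]
  by (auto simp: add_fm_def Let_def dest!: subsetD[OF yfree_progression_fm[OF yfree_covers_row_fm]]
      subsetD[OF yfree_row_to_col_fm])

lemma yfree_mul_fm: "yfree (mul_fm a b c) \<subseteq> {a, b, c}"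
proof -
  have add: "yfree (add_fm v a u) \<subseteq> {a, v, u}" for v u
    using yfree_add_fm by blast
  show ?thesis
    by (auto simp: mul_fm_def Let_def dest!: subsetD[OF yfree_progression_fm[OF add]] subsetD[OF yfree_row_to_col_fm])
qed

section \<open>Translating arithmetic\<close>

definition row_env :: "(nat \<Rightarrow> nat list) \<Rightarrow> bool" where
  "row_env e \<longleftrightarrow> (\<forall>i. \<exists>n. e i = row n)"

text \<open>\<open>sum_list\<close> reads the number n off the row [n].\<close>

definition row_values :: "(nat \<Rightarrow> nat list) \<Rightarrow> nat \<Rightarrow> nat" where
  "row_values e i = sum_list (e i)"

definition row_definable :: "nat set \<Rightarrow> ((nat \<Rightarrow> nat list) \<Rightarrow> bool) \<Rightarrow> bool" where
  "row_definable V S \<longleftrightarrow> (\<exists>\<psi>. yfree \<psi> \<subseteq> V \<and> (\<forall>e. row_env e \<longrightarrow> sat_Y e \<psi> = S e))"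

lemma row_env_upd [simp]: "row_env e \<Longrightarrow> row_env (e(x := row n))"
  by (simp add: row_env_def)

lemma row_env_is_partition: "row_env e \<Longrightarrow> is_partition (e i)"
  by (metis row_env_def is_partition_row)

lemma row_values_upd [simp]: "row_values (e(x := row n)) = (row_values e)(x := n)"
  by (auto simp: row_values_def)

lemma row_values_rows: "row_values (\<lambda>i. row (f i)) = f"
  by (auto simp: row_values_def)

lemma row_definableI: "yfree \<psi> \<subseteq> V \<Longrightarrow> (\<And>e. row_env e \<Longrightarrow> sat_Y e \<psi> = S e) \<Longrightarrow> row_definable V S"
  unfolding row_definable_def by blast

lemma row_definable_weaken:
  "row_definable V S \<Longrightarrow> V \<subseteq> W \<Longrightarrow> (\<And>e. row_env e \<Longrightarrow> S e = T e) \<Longrightarrow> row_definable W T"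
  unfolding row_definable_def by blast

lemma row_definable_neg: "row_definable V S \<Longrightarrow> row_definable V (\<lambda>e. \<not> S e)"
  unfolding row_definable_def by (metis sat_Y.simps(3) yfree.simps(3))

lemma row_definable_conj:
  "row_definable V S \<Longrightarrow> row_definable W T \<Longrightarrow> row_definable (V \<union> W) (\<lambda>e. S e \<and> T e)"
  unfolding row_definable_def by (metis (no_types, lifting) Un_mono sat_Y.simps(4) yfree.simps(4))

lemma row_definable_disj:
  "row_definable V S \<Longrightarrow> row_definable W T \<Longrightarrow> row_definable (V \<union> W) (\<lambda>e. S e \<or> T e)"
  unfolding row_definable_def by (metis (no_types, lifting) Un_mono sat_Y.simps(5) yfree.simps(5))

lemma row_definable_imp:
  "row_definable V S \<Longrightarrow> row_definable W T \<Longrightarrow> row_definable (V \<union> W) (\<lambda>e. S e \<longrightarrow> T e)"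
  unfolding row_definable_def by (metis (no_types, lifting) Un_mono sat_Y.simps(6) yfree.simps(6))

lemma row_definable_Ex:
  assumes "row_definable V S"
  shows "row_definable (V - {x}) (\<lambda>e. \<exists>n. S (e(x := row n)))"
proof -
  obtain \<psi> where "yfree \<psi> \<subseteq> V" and \<psi>: "\<And>e. row_env e \<Longrightarrow> sat_Y e \<psi> = S e"
    using assms unfolding row_definable_def by blast
  then show ?thesis
    by (intro row_definableI[of "YEx x (YConj (row_fm x) \<psi>)"]) (auto simp: ex_row_iff \<psi>)
qed

lemma row_definable_All:
  assumes "row_definable V S"
  shows "row_definable (V - {x}) (\<lambda>e. \<forall>n. S (e(x := row n)))"
proof -
  obtain \<psi> where "yfree \<psi> \<subseteq> V" and \<psi>: "\<And>e. row_env e \<Longrightarrow> sat_Y e \<psi> = S e"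
    using assms unfolding row_definable_def by blast
  then show ?thesis
    by (intro row_definableI[of "YAll x (YImp (row_fm x) \<psi>)"]) (auto simp: all_row_iff \<psi>)
qed

primrec var_bound :: "aterm \<Rightarrow> nat" where
  "var_bound (AVar x) = Suc x"
| "var_bound (APlus s t) = max (var_bound s) (var_bound t)"
| "var_bound (ATimes s t) = max (var_bound s) (var_bound t)"

lemma less_var_bound: "x \<in> atvars t \<Longrightarrow> x < var_bound t"
  by (induction t) auto

lemma aeval_upd [simp]: "x \<notin> atvars t \<Longrightarrow> aeval (f(x := n)) t = aeval f t"
  by (induction t) auto

lemma row_definable_add_rel: "row_definable {u, v, z} (\<lambda>e. add_rel (e u) (e v) (e z))"
  by (rule row_definableI[OF yfree_add_fm]) simp

lemma row_definable_mul_rel: "row_definable {u, v, z} (\<lambda>e. mul_rel (e u) (e v) (e z))"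
  by (rule row_definableI[OF yfree_mul_fm]) simp

lemma row_definable_binop:
  assumes s: "\<And>u. u \<notin> atvars s \<Longrightarrow>
      row_definable (insert u (atvars s)) (\<lambda>e. e u = row (aeval (row_values e) s))"
    and t: "\<And>v. v \<notin> atvars t \<Longrightarrow>
      row_definable (insert v (atvars t)) (\<lambda>e. e v = row (aeval (row_values e) t))"
    and rel: "\<And>u v z. row_definable {u, v, z} (\<lambda>e. Rel (e u) (e v) (e z))"
    and rel_iff: "\<And>a b c. is_partition c \<Longrightarrow> Rel (row a) (row b) c \<longleftrightarrow> c = row (f a b)"
  shows "row_definable (insert z (atvars s \<union> atvars t))
    (\<lambda>e. e z = row (f (aeval (row_values e) s) (aeval (row_values e) t)))"
proof -
  define u where "u = z + var_bound s + var_bound t + 1"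
  define v where "v = Suc u"
  have fresh: "u \<notin> atvars s \<union> atvars t" "v \<notin> atvars s \<union> atvars t" "u \<noteq> v" "u \<noteq> z" "v \<noteq> z"
    using less_var_bound[of _ s] less_var_bound[of _ t] unfolding u_def v_def by fastforce+
  let ?S = "\<lambda>e. e u = row (aeval (row_values e) s) \<and> e v = row (aeval (row_values e) t) \<and> Rel (e u) (e v) (e z)"
  have "row_definable (insert u (atvars s) \<union> (insert v (atvars t) \<union> {u, v, z})) ?S"
    using fresh by (intro row_definable_conj s t rel) auto
  then have "row_definable (insert u (atvars s) \<union> (insert v (atvars t) \<union> {u, v, z}) - {v} - {u})
      (\<lambda>e. \<exists>n m. ?S (e(u := row n, v := row m)))"
    by (intro row_definable_Ex)
  then show ?thesis
  proof (rule row_definable_weaken)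
    fix e
    assume "row_env e"
    then show "(\<exists>n m. ?S (e(u := row n, v := row m))) \<longleftrightarrow>
        e z = row (f (aeval (row_values e) s) (aeval (row_values e) t))"
      using fresh rel_iff[OF row_env_is_partition] by auto
  qed (use fresh in auto)
qed

lemma row_definable_term:
  "z \<notin> atvars t \<Longrightarrow> row_definable (insert z (atvars t)) (\<lambda>e. e z = row (aeval (row_values e) t))"
proof (induction t arbitrary: z)
  case (AVar x)
  show ?case
  proof (rule row_definableI[of "YEq (YVar z) (YVar x)"])
    fix e
    assume "row_env e"
    then obtain n where "e x = row n"
      by (auto simp: row_env_def)
    then show "sat_Y e (YEq (YVar z) (YVar x)) \<longleftrightarrow> e z = row (aeval (row_values e) (AVar x))"
      by (simp add: row_values_def)
  qed simp
next
  case (APlus s t)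
  show ?case
    using row_definable_binop[OF APlus.IH row_definable_add_rel add_rel_iff] by simp
next
  case (ATimes s t)
  show ?case
    using row_definable_binop[OF ATimes.IH row_definable_mul_rel mul_rel_iff] by simp
qed

lemma row_definable_afm: "row_definable (afree \<phi>) (\<lambda>e. sat_N (row_values e) \<phi>)"
proof (induction \<phi>)
  case (AEq s t)
  let ?z = "var_bound s + var_bound t"
  have fresh: "?z \<notin> atvars s" "?z \<notin> atvars t"
    using less_var_bound[of ?z s] less_var_bound[of ?z t] by auto
  have "row_definable (insert ?z (atvars s) \<union> insert ?z (atvars t) - {?z})
      (\<lambda>e. \<exists>n. (e(?z := row n)) ?z = row (aeval (row_values (e(?z := row n))) s) \<and>
                (e(?z := row n)) ?z = row (aeval (row_values (e(?z := row n))) t))"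
    by (intro row_definable_Ex row_definable_conj row_definable_term fresh)
  then show ?case
    by (rule row_definable_weaken) (use fresh in auto)
next
  case (AEx x \<phi>)
  show ?case
    using row_definable_Ex[OF AEx.IH, of x] unfolding row_values_upd sat_N.simps afree.simps .
next
  case (AAll x \<phi>)
  show ?case
    using row_definable_All[OF AAll.IH, of x] unfolding row_values_upd sat_N.simps afree.simps .
qed (use row_definable_neg row_definable_conj row_definable_disj row_definable_imp in fastforce)+

theorem lemma4p2:
  fixes k :: nat and \<phi> :: afm
  assumes "afree \<phi> \<subseteq> {..<k}"
  shows "\<exists>\<psi> :: yfm. yfree \<psi> \<subseteq> {..<k} \<and>
           (\<forall>ns :: nat list. length ns = k \<longrightarrow>
              (sat_N (\<lambda>i. ns ! i) \<phi> \<longleftrightarrow> sat_Y (\<lambda>i. single_part (ns ! i)) \<psi>))"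
proof -
  obtain \<psi> where "yfree \<psi> \<subseteq> afree \<phi>"
    and \<psi>: "\<And>e. row_env e \<Longrightarrow> sat_Y e \<psi> \<longleftrightarrow> sat_N (row_values e) \<phi>"
    using row_definable_afm[of \<phi>] unfolding row_definable_def by blast
  moreover have "row_env (\<lambda>i. row (ns ! i))" for ns
    by (auto simp: row_env_def)
  ultimately show ?thesis
    using assms by (intro exI[of _ \<psi>]) (auto simp: row_values_rows)
qed

end
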